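(* Let $L\subset\mathbb{C}$ be a lattice. If for some $p_0\in\mathbb{C}$ and some $\alpha\in(0,\pi)$ there are more than three pairs of periodic trajectories of the billiard associated to $L$ which pass through $p_0$ and form the angle $\alpha$ at $p_0$ (equivalently: there are at least four directions $v\in\mathbb{C}^*$, pairwise not real-proportional, with $v\in\mathbb{R}\cdot L$ and $e^{i\alpha}v\in\mathbb{R}\cdot L$), then the elliptic curve $\mathbb{C}/L$ has complex multiplication. Conversely, if $\mathbb{C}/L$ has complex multiplication then for infinitely many $\alpha\in(0,\pi)$ and every $p_0\in\mathbb{C}$ there are infinitely many pairs of periodic trajectories passing through $p_0$ and forming the angle $\alpha$ at $p_0$.
   Context: The billiard associated to a lattice $L\subset\mathbb{C}$ is the billiard on a parallelogram table determined by $L$; directions are nonzero complex numbers, and a trajectory with direction $v\in\mathbb{C}^*$ is periodic if and only if $v\in\mathbb{R}\cdot L=\{t\lambda: t\in\mathbb{R},\lambda\in L\}$. Two periodic trajectories through $p_0$ with directions $v,v'$ form the angle $\alpha$ at $p_0$ if $v'=e^{i\alpha}v$ up to a positive real factor; pairs are counted up to real proportionality of the direction $v$. $\mathbb{C}/L$ has complex multiplication if its endomorphism ring is strictly larger than $\mathbb{Z}$, i.e. if $L$ is homothetic to $\mathbb{Z}\tau+\mathbb{Z}$ with $\tau$ an imaginary quadratic number. *)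

theory Defs
  imports "HOL-Analysis.Analysis"
begin

definition lattice_of :: "complex \<Rightarrow> complex \<Rightarrow> complex set" where
  "lattice_of w1 w2 = {of_int m * w1 + of_int n * w2 | m n. True}"

definition is_lattice :: "complex set \<Rightarrow> bool" where
  "is_lattice L \<longleftrightarrow> (\<exists>w1 w2. Im (cnj w1 * w2) \<noteq> 0 \<and> L = lattice_of w1 w2)"

definition real_span_dirs :: "complex set \<Rightarrow> complex set" where
  "real_span_dirs L = {complex_of_real t * l | t l. l \<in> L}"

definition angle_pair_dirs :: "complex set \<Rightarrow> real \<Rightarrow> complex set" where
  "angle_pair_dirs L \<alpha> =
     {v. v \<noteq> 0 \<and> v \<in> real_span_dirs L \<and> cis \<alpha> * v \<in> real_span_dirs L}"

definition real_proportional :: "complex \<Rightarrow> complex \<Rightarrow> bool" where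
  "real_proportional v w \<longleftrightarrow> (\<exists>t::real. w = complex_of_real t * v)"

definition pairwise_nonprop :: "complex set \<Rightarrow> bool" where
  "pairwise_nonprop S \<longleftrightarrow> (\<forall>v\<in>S. \<forall>w\<in>S. v \<noteq> w \<longrightarrow> \<not> real_proportional v w)"

definition imag_quadratic :: "complex \<Rightarrow> bool" where
  "imag_quadratic \<tau> \<longleftrightarrow> Im \<tau> \<noteq> 0 \<and>
     (\<exists>a b c :: int. a \<noteq> 0 \<and> of_int a * \<tau>^2 + of_int b * \<tau> + of_int c = 0)"

definition has_CM :: "complex set \<Rightarrow> bool" where
  "has_CM L \<longleftrightarrow> (\<exists>c \<tau>. c \<noteq> 0 \<and> imag_quadratic \<tau> \<and> L = (\<lambda>z. c * z) ` lattice_of \<tau> 1)"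

end

theory Submission
  imports Defs
begin

text \<open>
  The signed area wedge u v = Im (cnj u * v) spanned by u and v is the basic tool: two
  nonzero vectors are real-proportional iff their area vanishes, rotations preserve areas,
  and the areas of vectors in the rational span QL of L are rational multiples of each other.

  Suppose cis alpha * l_i = r_i * l_i' with l_i, l_i' in L for three pairwise independent
  l_1, l_2, l_3. Then r_i r_j = wedge l_i l_j / wedge l_i' l_j' is rational, hence so is r_2 / r_1,
  and nu = cis alpha / r_1 maps the Q-basis l_1, l_2 of QL, and therefore all of QL, into QL.
  Expressing the non-real nu in the basis w_1, w_2 shows that tau = w_1 / w_2 is a root of a
  rational quadratic polynomial.

  Conversely, if a tau^2 + b tau + d = 0 then a mu L is contained in L for every mu in
  Z tau + Z, so rotating any lattice direction by Arg mu gives a lattice direction again; the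
  numbers mu = +-tau + k (k in N) have pairwise distinct arguments in (0, pi).
\<close>

section \<open>Signed area\<close>

definition wedge :: "complex \<Rightarrow> complex \<Rightarrow> real" where
  "wedge u v = Im (cnj u * v)"

lemma wedge_eq: "wedge u v = Re u * Im v - Im u * Re v"
  by (simp add: wedge_def)

lemma wedge_self [simp]: "wedge u u = 0"
  by (simp add: wedge_eq)

lemma wedge_scaleR_left: "wedge (of_real a * u) v = a * wedge u v"
  by (simp add: wedge_eq algebra_simps)

lemma wedge_scaleR_right: "wedge u (of_real a * v) = a * wedge u v"
  by (simp add: wedge_eq algebra_simps)

lemma wedge_mult_left: "wedge (c * u) (c * v) = (cmod c)\<^sup>2 * wedge u v"
  unfolding wedge_eq cmod_power2 by (simp add: algebra_simps power2_eq_square)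

lemma wedge_cramer:
  assumes "wedge u v \<noteq> 0"
  shows "z = of_real (wedge z v / wedge u v) * u + of_real (wedge u z / wedge u v) * v"
proof -
  have "of_real (wedge u v) * z = of_real (wedge z v) * u + of_real (wedge u z) * v"
    by (simp add: complex_eq_iff wedge_eq algebra_simps)
  then show ?thesis
    using assms by (simp add: field_simps)
qed

lemma real_proportional_iff_wedge:
  assumes "u \<noteq> 0"
  shows "real_proportional u v \<longleftrightarrow> wedge u v = 0"
proof
  assume "real_proportional u v"
  then show "wedge u v = 0"
    by (auto simp: real_proportional_def wedge_scaleR_right)
next
  assume w: "wedge u v = 0"
  have "of_real ((cmod u)\<^sup>2) * v = of_real (Re u * Re v + Im u * Im v) * u"
    using w unfolding cmod_power2
    by (simp add: complex_eq_iff wedge_eq algebra_simps power2_eq_square)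
  then have "v = of_real ((Re u * Re v + Im u * Im v) / (cmod u)\<^sup>2) * u"
    using assms by (simp add: field_simps)
  then show "real_proportional u v"
    unfolding real_proportional_def by blast
qed

section \<open>Lattices and their rational span\<close>

lemma lattice_of_memI: "of_int m * w1 + of_int n * w2 \<in> lattice_of w1 w2"
  unfolding lattice_of_def by blast

lemma generators_in_lattice_of: "w1 \<in> lattice_of w1 w2" "w2 \<in> lattice_of w1 w2"
  using lattice_of_memI[of 1 w1 0 w2] lattice_of_memI[of 0 w1 1 w2] by simp_all

lemma image_mult_lattice_of: "(\<lambda>z. c * z) ` lattice_of w1 w2 = lattice_of (c * w1) (c * w2)"
proof -
  have "(\<lambda>z. c * z) ` lattice_of w1 w2 = {c * (of_int m * w1 + of_int n * w2) | m n. True}"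
    unfolding lattice_of_def by blast
  also have "\<dots> = lattice_of (c * w1) (c * w2)"
    unfolding lattice_of_def by (simp add: algebra_simps)
  finally show ?thesis .
qed

definition rat_span :: "complex \<Rightarrow> complex \<Rightarrow> complex set" where
  "rat_span w1 w2 = {of_real a * w1 + of_real b * w2 | a b. a \<in> \<rat> \<and> b \<in> \<rat>}"

lemma lattice_of_subset_rat_span: "lattice_of w1 w2 \<subseteq> rat_span w1 w2"
proof
  fix z assume "z \<in> lattice_of w1 w2"
  then obtain m n :: int where "z = of_real (of_int m) * w1 + of_real (of_int n) * w2"
    unfolding lattice_of_def by auto
  then show "z \<in> rat_span w1 w2"
    unfolding rat_span_def using Rats_of_int by blast
qed

lemma rat_span_add:
  assumes "z \<in> rat_span w1 w2" "z' \<in> rat_span w1 w2"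
  shows "z + z' \<in> rat_span w1 w2"
proof -
  obtain a b a' b' where "a \<in> \<rat>" "b \<in> \<rat>" "a' \<in> \<rat>" "b' \<in> \<rat>"
    "z = of_real a * w1 + of_real b * w2" "z' = of_real a' * w1 + of_real b' * w2"
    using assms unfolding rat_span_def by blast
  then have "z + z' = of_real (a + a') * w1 + of_real (b + b') * w2 \<and> a + a' \<in> \<rat> \<and> b + b' \<in> \<rat>"
    by (simp add: algebra_simps)
  then show ?thesis
    unfolding rat_span_def by blast
qed

lemma rat_span_scaleR:
  assumes "q \<in> \<rat>" "z \<in> rat_span w1 w2"
  shows "of_real q * z \<in> rat_span w1 w2"
proof -
  obtain a b where "a \<in> \<rat>" "b \<in> \<rat>" "z = of_real a * w1 + of_real b * w2"
    using assms(2) unfolding rat_span_def by blast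
  then have "of_real q * z = of_real (q * a) * w1 + of_real (q * b) * w2 \<and> q * a \<in> \<rat> \<and> q * b \<in> \<rat>"
    using assms(1) by (simp add: algebra_simps)
  then show ?thesis
    unfolding rat_span_def by blast
qed

lemma wedge_rat_span:
  assumes "u \<in> rat_span w1 w2" "v \<in> rat_span w1 w2"
  obtains q where "q \<in> \<rat>" "wedge u v = q * wedge w1 w2"
proof -
  obtain a b c d where "a \<in> \<rat>" "b \<in> \<rat>" "c \<in> \<rat>" "d \<in> \<rat>"
    "u = of_real a * w1 + of_real b * w2" "v = of_real c * w1 + of_real d * w2"
    using assms unfolding rat_span_def by blast
  moreover have "wedge (of_real a * w1 + of_real b * w2) (of_real c * w1 + of_real d * w2)
      = (a * d - b * c) * wedge w1 w2"
    by (simp add: wedge_eq algebra_simps)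
  ultimately show ?thesis
    using that[of "a * d - b * c"] by simp
qed

text \<open>The quotient is rational even when it is the junk value $0/0$.\<close>
lemma wedge_ratio_rat_span:
  assumes "u \<in> rat_span w1 w2" "v \<in> rat_span w1 w2" "x \<in> rat_span w1 w2" "y \<in> rat_span w1 w2"
  shows "wedge x y / wedge u v \<in> \<rat>"
proof -
  obtain p q where "p \<in> \<rat>" "wedge x y = p * wedge w1 w2" "q \<in> \<rat>" "wedge u v = q * wedge w1 w2"
    using wedge_rat_span assms by metis
  then show ?thesis
    by (cases "wedge w1 w2 = 0") auto
qed

lemma rat_span_coords:
  assumes "u \<in> rat_span w1 w2" "v \<in> rat_span w1 w2" "z \<in> rat_span w1 w2" "wedge u v \<noteq> 0"
  obtains a b where "a \<in> \<rat>" "b \<in> \<rat>" "z = of_real a * u + of_real b * v"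
  using that wedge_cramer[OF assms(4)] wedge_ratio_rat_span assms(1-3) by metis

lemma rat_span_mult_closed:
  assumes "u \<in> rat_span w1 w2" "v \<in> rat_span w1 w2" "wedge u v \<noteq> 0"
    and "\<nu> * u \<in> rat_span w1 w2" "\<nu> * v \<in> rat_span w1 w2"
    and "z \<in> rat_span w1 w2"
  shows "\<nu> * z \<in> rat_span w1 w2"
proof -
  obtain a b where "a \<in> \<rat>" "b \<in> \<rat>" "z = of_real a * u + of_real b * v"
    using rat_span_coords assms(1-3,6) by metis
  then have "\<nu> * z = of_real a * (\<nu> * u) + of_real b * (\<nu> * v)"
    by (simp add: algebra_simps)
  then show ?thesis
    using assms(4,5) \<open>a \<in> \<rat>\<close> \<open>b \<in> \<rat>\<close> by (simp add: rat_span_add rat_span_scaleR)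
qed

section \<open>Complex multiplication from a non-real multiplier\<close>

lemma rat_common_denominator:
  fixes a b c :: real
  assumes "a \<in> \<rat>" "b \<in> \<rat>" "c \<in> \<rat>"
  obtains N :: int where "N \<noteq> 0" "of_int N * a \<in> \<int>" "of_int N * b \<in> \<int>" "of_int N * c \<in> \<int>"
proof -
  obtain pa qa pb qb pc qc :: int where q: "qa > 0" "qb > 0" "qc > 0"
    and "a = of_int pa / of_int qa" "b = of_int pb / of_int qb" "c = of_int pc / of_int qc"
    using assms by (metis Rats_cases')
  then have "of_int (qa * qb * qc) * a = of_int (pa * qb * qc)"
    "of_int (qa * qb * qc) * b = of_int (qa * pb * qc)"
    "of_int (qa * qb * qc) * c = of_int (qa * qb * pc)"
    by (simp_all add: field_simps)
  then show ?thesis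
    using that[of "qa * qb * qc"] q by (metis Ints_of_int mult_pos_pos less_irrefl)
qed

lemma imag_quadratic_of_rat_coeffs:
  fixes a b c :: real
  assumes "Im \<tau> \<noteq> 0" "a \<noteq> 0" "a \<in> \<rat>" "b \<in> \<rat>" "c \<in> \<rat>"
    and "of_real a * \<tau>\<^sup>2 + of_real b * \<tau> + of_real c = 0"
  shows "imag_quadratic \<tau>"
proof -
  obtain N :: int where "N \<noteq> 0" "of_int N * a \<in> \<int>" "of_int N * b \<in> \<int>" "of_int N * c \<in> \<int>"
    using rat_common_denominator assms(3-5) by metis
  then obtain i j k :: int where ijk: "of_int N * a = of_int i" "of_int N * b = of_int j" "of_int N * c = of_int k"
    by (metis Ints_cases)
  have "of_int i * \<tau>\<^sup>2 + of_int j * \<tau> + of_int k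
      = of_real (of_int i) * \<tau>\<^sup>2 + of_real (of_int j) * \<tau> + of_real (of_int k)"
    by simp
  also have "\<dots> = of_int N * (of_real a * \<tau>\<^sup>2 + of_real b * \<tau> + of_real c)"
    unfolding ijk[symmetric] by (simp add: algebra_simps)
  finally have "of_int i * \<tau>\<^sup>2 + of_int j * \<tau> + of_int k = 0"
    using assms(6) by simp
  moreover have "i \<noteq> 0"
    using ijk(1) \<open>N \<noteq> 0\<close> assms(2) by (metis mult_eq_0_iff of_int_0 of_int_eq_0_iff)
  ultimately show ?thesis
    unfolding imag_quadratic_def using assms(1) by blast
qed

lemma has_CM_of_nonreal_multiplier:
  assumes "wedge w1 w2 \<noteq> 0" "Im \<nu> \<noteq> 0"
    and "\<nu> * w1 \<in> rat_span w1 w2" "\<nu> * w2 \<in> rat_span w1 w2"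
  shows "has_CM (lattice_of w1 w2)"
proof -
  obtain A B C D where ABCD: "A \<in> \<rat>" "B \<in> \<rat>" "C \<in> \<rat>" "D \<in> \<rat>"
    "\<nu> * w1 = of_real A * w1 + of_real B * w2" "\<nu> * w2 = of_real C * w1 + of_real D * w2"
    using assms(3,4) unfolding rat_span_def by blast
  have w2: "w2 \<noteq> 0"
    using assms(1) by (auto simp: wedge_eq)
  define \<tau> where "\<tau> = w1 / w2"
  have w1: "w1 = w2 * \<tau>"
    using w2 by (simp add: \<tau>_def)
  have "w2 * \<nu> = w2 * (of_real C * \<tau> + of_real D)"
    using ABCD(6) unfolding w1 by (simp add: algebra_simps)
  then have \<nu>: "\<nu> = of_real C * \<tau> + of_real D"
    using w2 by simp
  have "w2 * (\<nu> * \<tau>) = w2 * (of_real A * \<tau> + of_real B)"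
    using ABCD(5) unfolding w1 by (simp add: algebra_simps)
  then have "\<nu> * \<tau> = of_real A * \<tau> + of_real B"
    using w2 by simp
  then have "of_real C * \<tau>\<^sup>2 + of_real (D - A) * \<tau> + of_real (- B) = 0"
    unfolding \<nu> by (simp add: algebra_simps power2_eq_square)
  moreover have "C \<noteq> 0"
    using assms(2) \<nu> by auto
  moreover have "Im \<tau> \<noteq> 0"
    using assms(1) wedge_mult_left[of w2 \<tau> 1] w2 unfolding w1 by (auto simp: wedge_eq)
  ultimately have "imag_quadratic \<tau>"
    using imag_quadratic_of_rat_coeffs ABCD(1-4) by (metis Rats_diff Rats_minus_iff)
  moreover have "lattice_of w1 w2 = (\<lambda>z. w2 * z) ` lattice_of \<tau> 1"
    unfolding image_mult_lattice_of w1 by simp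
  ultimately show ?thesis
    unfolding has_CM_def using w2 by blast
qed

section \<open>Three directions force complex multiplication\<close>

lemma angle_pair_dirsE:
  assumes "v \<in> angle_pair_dirs L \<alpha>"
  obtains t l r l' where "v = of_real t * l" "l \<in> L" "l' \<in> L" "cis \<alpha> * l = of_real r * l'"
proof -
  obtain t l s l' where tl: "v = of_real t * l" "l \<in> L" and sl: "cis \<alpha> * v = of_real s * l'" "l' \<in> L"
    using assms unfolding angle_pair_dirs_def real_span_dirs_def by blast
  have "t \<noteq> 0"
    using assms tl(1) unfolding angle_pair_dirs_def by auto
  then have "cis \<alpha> * l = of_real (s / t) * l'"
    using tl(1) sl(1) by (simp add: field_simps)
  then show ?thesis
    using that tl sl(2) by blast
qed

lemma rotation_ratio_rational:
  assumes "cmod \<mu> = 1"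
    and "l1 \<in> rat_span w1 w2" "l2 \<in> rat_span w1 w2" "l3 \<in> rat_span w1 w2"
    and "l1' \<in> rat_span w1 w2" "l2' \<in> rat_span w1 w2" "l3' \<in> rat_span w1 w2"
    and "\<mu> * l1 = of_real r1 * l1'" "\<mu> * l2 = of_real r2 * l2'" "\<mu> * l3 = of_real r3 * l3'"
    and "wedge l1 l3 \<noteq> 0" "wedge l2 l3 \<noteq> 0"
  shows "r2 / r1 \<in> \<rat>"
proof -
  have product_rational: "r * r' \<in> \<rat> \<and> r * r' \<noteq> 0"
    if "l \<in> rat_span w1 w2" "l' \<in> rat_span w1 w2" "k \<in> rat_span w1 w2" "k' \<in> rat_span w1 w2"
      "\<mu> * l = of_real r * k" "\<mu> * l' = of_real r' * k'" "wedge l l' \<noteq> 0" for l l' k k' r r'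
  proof -
    have "wedge l l' = wedge (\<mu> * l) (\<mu> * l')"
      using assms(1) by (simp add: wedge_mult_left)
    also have "\<dots> = r * r' * wedge k k'"
      unfolding that(5,6) by (simp add: wedge_scaleR_left wedge_scaleR_right)
    finally have eq: "wedge l l' = r * r' * wedge k k'" .
    then have "r * r' \<noteq> 0" "wedge k k' \<noteq> 0"
      using that(7) by (metis mult_zero_left mult_zero_right)+
    then have "r * r' = wedge l l' / wedge k k'"
      unfolding eq by simp
    moreover have "wedge l l' / wedge k k' \<in> \<rat>"
      using wedge_ratio_rat_span that(1-4) by blast
    ultimately show ?thesis
      using \<open>r * r' \<noteq> 0\<close> by simp
  qed
  have "r1 * r3 \<in> \<rat>" "r1 * r3 \<noteq> 0" "r2 * r3 \<in> \<rat>"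
    using product_rational[OF assms(2,4,5,7,8,10,11)] product_rational[OF assms(3,4,6,7,9,10,12)]
    by auto
  then have "(r2 * r3) / (r1 * r3) \<in> \<rat>"
    by (intro Rats_divide)
  then show ?thesis
    using \<open>r1 * r3 \<noteq> 0\<close> by simp
qed

lemma has_CM_of_three_angle_pair_dirs:
  assumes "wedge w1 w2 \<noteq> 0" "0 < \<alpha>" "\<alpha> < pi"
    and "v1 \<in> angle_pair_dirs (lattice_of w1 w2) \<alpha>" "v2 \<in> angle_pair_dirs (lattice_of w1 w2) \<alpha>"
      "v3 \<in> angle_pair_dirs (lattice_of w1 w2) \<alpha>"
    and "wedge v1 v2 \<noteq> 0" "wedge v1 v3 \<noteq> 0" "wedge v2 v3 \<noteq> 0"
  shows "has_CM (lattice_of w1 w2)"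
proof -
  let ?L = "lattice_of w1 w2" and ?V = "rat_span w1 w2"
  obtain t1 l1 r1 l1' where 1: "v1 = of_real t1 * l1" "l1 \<in> ?L" "l1' \<in> ?L" "cis \<alpha> * l1 = of_real r1 * l1'"
    by (rule angle_pair_dirsE[OF assms(4)])
  obtain t2 l2 r2 l2' where 2: "v2 = of_real t2 * l2" "l2 \<in> ?L" "l2' \<in> ?L" "cis \<alpha> * l2 = of_real r2 * l2'"
    by (rule angle_pair_dirsE[OF assms(5)])
  obtain t3 l3 r3 l3' where 3: "v3 = of_real t3 * l3" "l3 \<in> ?L" "l3' \<in> ?L" "cis \<alpha> * l3 = of_real r3 * l3'"
    by (rule angle_pair_dirsE[OF assms(6)])
  have "wedge l1 l2 \<noteq> 0" "wedge l1 l3 \<noteq> 0" "wedge l2 l3 \<noteq> 0"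
    using assms(7-9) unfolding 1(1) 2(1) 3(1) by (auto simp: wedge_scaleR_left wedge_scaleR_right)
  have in_V: "l1 \<in> ?V" "l2 \<in> ?V" "l3 \<in> ?V" "l1' \<in> ?V" "l2' \<in> ?V" "l3' \<in> ?V"
    using 1 2 3 lattice_of_subset_rat_span by blast+
  have \<rho>: "r2 / r1 \<in> \<rat>"
    by (rule rotation_ratio_rational[OF _ in_V 1(4) 2(4) 3(4)]) (use \<open>wedge l1 l3 \<noteq> 0\<close> \<open>wedge l2 l3 \<noteq> 0\<close> in auto)
  have "r1 \<noteq> 0"
    using 1(4) \<open>wedge l1 l3 \<noteq> 0\<close> by (auto simp: wedge_eq)
  define \<nu> where "\<nu> = cis \<alpha> / of_real r1"
  have "\<nu> * l1 = l1'" "\<nu> * l2 = of_real (r2 / r1) * l2'"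
    using 1(4) 2(4) \<open>r1 \<noteq> 0\<close> unfolding \<nu>_def by (simp_all add: field_simps)
  then have "\<nu> * l1 \<in> ?V" "\<nu> * l2 \<in> ?V"
    using in_V(4) rat_span_scaleR[OF \<rho> in_V(5)] by presburger+
  then have "\<nu> * w1 \<in> ?V" "\<nu> * w2 \<in> ?V"
    using rat_span_mult_closed[OF in_V(1,2) \<open>wedge l1 l2 \<noteq> 0\<close>] generators_in_lattice_of
      lattice_of_subset_rat_span by blast+
  moreover have "Im \<nu> \<noteq> 0"
    using assms(2,3) \<open>r1 \<noteq> 0\<close> sin_gt_zero[of \<alpha>] unfolding \<nu>_def by simp
  ultimately show ?thesis
    using has_CM_of_nonreal_multiplier assms(1) by blast
qed

lemma has_CM_of_angle_pair_dirs:
  assumes "is_lattice L" "\<alpha> \<in> {0<..<pi}"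
    and "S \<subseteq> angle_pair_dirs L \<alpha>" "pairwise_nonprop S" "3 \<le> card S"
  shows "has_CM L"
proof -
  obtain w1 w2 where w: "wedge w1 w2 \<noteq> 0" "L = lattice_of w1 w2"
    using assms(1) unfolding is_lattice_def wedge_def by blast
  have wedge_S: "wedge v w \<noteq> 0" if "v \<in> S" "w \<in> S" "v \<noteq> w" for v w
    using assms(3,4) that real_proportional_iff_wedge
    unfolding pairwise_nonprop_def angle_pair_dirs_def by blast
  obtain T where "T \<subseteq> S" "card T = 3"
    using obtain_subset_with_card_n[OF assms(5)] by this
  then obtain v1 v2 v3 where v: "v1 \<in> S" "v2 \<in> S" "v3 \<in> S" "v1 \<noteq> v2" "v1 \<noteq> v3" "v2 \<noteq> v3"
    unfolding card_3_iff by blast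
  have dirs: "v1 \<in> angle_pair_dirs L \<alpha>" "v2 \<in> angle_pair_dirs L \<alpha>" "v3 \<in> angle_pair_dirs L \<alpha>"
    using assms(3) v(1-3) by blast+
  have "0 < \<alpha>" "\<alpha> < pi"
    using assms(2) by auto
  then show "has_CM L"
    using has_CM_of_three_angle_pair_dirs[OF w(1) _ _ dirs[unfolded w(2)]]
      wedge_S[OF v(1,2,4)] wedge_S[OF v(1,3,5)] wedge_S[OF v(2,3,6)]
    unfolding w(2) by blast
qed

section \<open>Complex multiplication gives infinitely many angles\<close>

lemma lattice_of_mult_closed:
  fixes a b d :: int
  assumes "of_int a * \<tau>\<^sup>2 + of_int b * \<tau> + of_int d = 0"
    and "m \<in> lattice_of \<tau> 1" "z \<in> lattice_of \<tau> 1"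
  shows "of_int a * m * z \<in> lattice_of \<tau> 1"
proof -
  obtain i j k n :: int where mz: "m = of_int i * \<tau> + of_int j" "z = of_int k * \<tau> + of_int n"
    using assms(2,3) unfolding lattice_of_def by auto
  have "of_int a * m * z
      = of_int (i * k) * (of_int a * \<tau>\<^sup>2 + of_int b * \<tau> + of_int d)
        + of_int (a * (i * n + j * k) - b * i * k) * \<tau> + of_int (a * j * n - d * i * k) * 1"
    unfolding mz of_int_mult of_int_add of_int_diff by algebra
  then have "of_int a * m * z = of_int (a * (i * n + j * k) - b * i * k) * \<tau> + of_int (a * j * n - d * i * k) * 1"
    using assms(1) by simp
  then show ?thesis
    unfolding lattice_of_def by blast
qed

lemma lattice_subset_real_span_dirs: "L \<subseteq> real_span_dirs L"
  unfolding real_span_dirs_def by (force intro: exI[of _ 1])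

lemma real_span_dirs_scaleR:
  assumes "z \<in> real_span_dirs L"
  shows "of_real s * z \<in> real_span_dirs L"
proof -
  obtain t l where "z = of_real t * l" "l \<in> L"
    using assms unfolding real_span_dirs_def by blast
  then have "of_real s * z = of_real (s * t) * l \<and> l \<in> L"
    by simp
  then show ?thesis
    unfolding real_span_dirs_def by blast
qed

lemma cis_Arg_mult_real_span_dirs:
  assumes "\<mu> \<noteq> 0" "\<mu> * v \<in> real_span_dirs L"
  shows "cis (Arg \<mu>) * v \<in> real_span_dirs L"
proof -
  have "cis (Arg \<mu>) * v = of_real (1 / cmod \<mu>) * (\<mu> * v)"
    using assms(1) by (simp add: cis_Arg sgn_div_norm scaleR_conv_of_real field_simps)
  then show ?thesis
    using real_span_dirs_scaleR[OF assms(2)] by presburger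
qed

lemma CM_lattice_subset_angle_pair_dirs:
  fixes a b d :: int
  assumes "L = (\<lambda>z. c * z) ` lattice_of \<tau> 1" "a \<noteq> 0"
    and "of_int a * \<tau>\<^sup>2 + of_int b * \<tau> + of_int d = 0"
    and "\<mu> \<in> lattice_of \<tau> 1" "\<mu> \<noteq> 0"
  shows "L - {0} \<subseteq> angle_pair_dirs L (Arg \<mu>)"
proof
  fix v assume v: "v \<in> L - {0}"
  then obtain z where z: "v = c * z" "z \<in> lattice_of \<tau> 1"
    using assms(1) by blast
  have "c * (of_int a * \<mu> * z) \<in> L"
    using assms(1) lattice_of_mult_closed[OF assms(3,4) z(2)] by blast
  then have "of_real (1 / of_int a) * (c * (of_int a * \<mu> * z)) \<in> real_span_dirs L"
    using lattice_subset_real_span_dirs real_span_dirs_scaleR by blast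
  then have "\<mu> * v \<in> real_span_dirs L"
    using assms(2) z(1) by (simp add: field_simps)
  then show "v \<in> angle_pair_dirs L (Arg \<mu>)"
    using v cis_Arg_mult_real_span_dirs[OF assms(5)] lattice_subset_real_span_dirs
    unfolding angle_pair_dirs_def by blast
qed

lemma lattice_infinite_pairwise_nonprop:
  assumes "is_lattice L"
  obtains S where "infinite S" "S \<subseteq> L - {0}" "pairwise_nonprop S"
proof -
  obtain w1 w2 where w: "wedge w1 w2 \<noteq> 0" and L: "L = lattice_of w1 w2"
    using assms unfolding is_lattice_def wedge_def by blast
  define f where "f n = of_nat n * w1 + w2" for n :: nat
  have wedge_f: "wedge (f n) (f m) = (real n - real m) * wedge w1 w2" for n m
    by (simp add: f_def wedge_eq algebra_simps)
  have f_nonzero: "f n \<noteq> 0" for n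
    using wedge_f[of n "Suc n"] w by (auto simp: wedge_eq)
  have "inj f"
  proof (rule injI)
    fix n m assume "f n = f m"
    then have "(real n - real m) * wedge w1 w2 = 0"
      using wedge_f[of n m] by simp
    then show "n = m"
      using w by simp
  qed
  moreover have "range f \<subseteq> L - {0}"
    using f_nonzero lattice_of_memI[of "int _" w1 1 w2] by (auto simp: f_def L)
  moreover have "pairwise_nonprop (range f)"
    unfolding pairwise_nonprop_def
    using wedge_f w f_nonzero by (auto simp: real_proportional_iff_wedge)
  ultimately show ?thesis
    using that range_inj_infinite by blast
qed

lemma wedge_eq_0_if_Arg_eq:
  assumes "Arg u = Arg v"
  shows "wedge u v = 0"
proof -
  have "wedge u v = wedge (of_real (cmod u) * cis (Arg u)) (of_real (cmod v) * cis (Arg u))"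
    using assms rcis_cmod_Arg[of u] rcis_cmod_Arg[of v] by (simp add: rcis_def)
  then show ?thesis
    by (simp add: wedge_scaleR_left wedge_scaleR_right)
qed

lemma inj_Arg_add_of_nat:
  assumes "Im x \<noteq> 0"
  shows "inj (\<lambda>k::nat. Arg (x + of_nat k))"
proof (rule injI)
  fix k j :: nat assume "Arg (x + of_nat k) = Arg (x + of_nat j)"
  then have "wedge (x + of_nat k) (x + of_nat j) = 0"
    by (rule wedge_eq_0_if_Arg_eq)
  moreover have "wedge (x + of_nat k) (x + of_nat j) = (real k - real j) * Im x"
    by (simp add: wedge_eq algebra_simps)
  ultimately show "k = j"
    using assms by simp
qed

lemma is_lattice_if_has_CM:
  assumes "has_CM L"
  shows "is_lattice L"
proof -
  obtain c \<tau> where "c \<noteq> 0" "imag_quadratic \<tau>" and L: "L = (\<lambda>z. c * z) ` lattice_of \<tau> 1"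
    using assms unfolding has_CM_def by blast
  moreover have "wedge (c * \<tau>) (c * 1) = - (cmod c)\<^sup>2 * Im \<tau>"
    unfolding wedge_mult_left by (simp add: wedge_eq)
  ultimately have "Im (cnj (c * \<tau>) * c) \<noteq> 0"
    unfolding imag_quadratic_def wedge_def by simp
  moreover have "L = lattice_of (c * \<tau>) c"
    unfolding L image_mult_lattice_of by simp
  ultimately show ?thesis
    unfolding is_lattice_def by blast
qed

lemma has_CM_infinite_angles:
  assumes "has_CM L"
  shows "infinite {\<alpha>\<in>{0<..<pi}. \<exists>S. infinite S \<and> S \<subseteq> angle_pair_dirs L \<alpha> \<and> pairwise_nonprop S}"
proof -
  obtain c \<tau> where "imag_quadratic \<tau>" and L: "L = (\<lambda>z. c * z) ` lattice_of \<tau> 1"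
    using assms unfolding has_CM_def by blast
  then obtain a b d :: int where a: "a \<noteq> 0" and quad: "of_int a * \<tau>\<^sup>2 + of_int b * \<tau> + of_int d = 0"
    and "Im \<tau> \<noteq> 0"
    unfolding imag_quadratic_def by blast
  define \<epsilon> :: int where "\<epsilon> = (if Im \<tau> > 0 then 1 else -1)"
  define \<mu> where "\<mu> k = of_int \<epsilon> * \<tau> + of_nat k" for k :: nat
  have Im_\<mu>: "Im (\<mu> k) > 0" for k
    using \<open>Im \<tau> \<noteq> 0\<close> by (auto simp: \<mu>_def \<epsilon>_def)
  obtain S where S: "infinite S" "S \<subseteq> L - {0}" "pairwise_nonprop S"
    using lattice_infinite_pairwise_nonprop[OF is_lattice_if_has_CM[OF assms]] by blast
  have "Arg (\<mu> k) \<in> {0<..<pi} \<and> S \<subseteq> angle_pair_dirs L (Arg (\<mu> k))" for k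
  proof
    show "Arg (\<mu> k) \<in> {0<..<pi}"
      using Arg_lt_pi Im_\<mu> by auto
    have "\<mu> k \<in> lattice_of \<tau> 1"
      using lattice_of_memI[of \<epsilon> \<tau> "int k" 1] by (simp add: \<mu>_def)
    moreover have "\<mu> k \<noteq> 0"
      using Im_\<mu>[of k] by auto
    ultimately show "S \<subseteq> angle_pair_dirs L (Arg (\<mu> k))"
      using CM_lattice_subset_angle_pair_dirs[OF L a quad] S(2) by blast
  qed
  then have "range (\<lambda>k. Arg (\<mu> k))
      \<subseteq> {\<alpha>\<in>{0<..<pi}. \<exists>S. infinite S \<and> S \<subseteq> angle_pair_dirs L \<alpha> \<and> pairwise_nonprop S}"
    using S by blast
  moreover have "Im (of_int \<epsilon> * \<tau>) > 0"
    using Im_\<mu>[of 0] by (simp add: \<mu>_def)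
  then have "inj (\<lambda>k. Arg (\<mu> k))"
    unfolding \<mu>_def by (intro inj_Arg_add_of_nat) (metis less_irrefl)
  ultimately show ?thesis
    using range_inj_infinite infinite_super by blast
qed

theorem theorem1p5:
  fixes L :: "complex set"
  assumes "is_lattice L"
  shows "(\<forall>\<alpha>\<in>{0<..<pi}. (\<exists>S. finite S \<and> card S \<ge> 4 \<and> S \<subseteq> angle_pair_dirs L \<alpha>
                                 \<and> pairwise_nonprop S) \<longrightarrow> has_CM L)
       \<and> (has_CM L \<longrightarrow>
            infinite {\<alpha>\<in>{0<..<pi}. \<exists>S. infinite S \<and> S \<subseteq> angle_pair_dirs L \<alpha> \<and> pairwise_nonprop S})"
proof (intro conjI ballI impI)
  fix \<alpha> assume \<alpha>: "\<alpha> \<in> {0<..<pi}"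
    and "\<exists>S. finite S \<and> card S \<ge> 4 \<and> S \<subseteq> angle_pair_dirs L \<alpha> \<and> pairwise_nonprop S"
  then obtain S where S: "card S \<ge> 4" "S \<subseteq> angle_pair_dirs L \<alpha>" "pairwise_nonprop S"
    by blast
  show "has_CM L"
    by (rule has_CM_of_angle_pair_dirs[OF assms \<alpha> S(2,3)]) (use S(1) in linarith)
next
  show "infinite {\<alpha>\<in>{0<..<pi}. \<exists>S. infinite S \<and> S \<subseteq> angle_pair_dirs L \<alpha> \<and> pairwise_nonprop S}"
    if "has_CM L"
    using has_CM_infinite_angles[OF that] .
qed

end
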